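(* Let $\kappa>1$. For every $n$ that is a power of $2$, $\tau_{2n}\le\tau_n^2$.
   Context: Fix $\kappa>1$. Define sequences indexed by powers of two: $z_1=1/\kappa$ and, for each power of two $n\ge1$, $z_{2n}=z_n\bigl(\xi+\sqrt{1+\xi^2}\bigr)$ with $\xi=1-z_n$. The Silver Convergence Rate is $\tau_n=\left(\frac{1-z_n}{1+z_n}\right)^2$. *)

theory Defs
  imports Complex_Main
begin

text \<open>The sequence z is indexed by powers of two: silver_z kappa k is z at n = 2^k.\<close>
fun silver_z :: "real \<Rightarrow> nat \<Rightarrow> real" where
  "silver_z kappa 0 = 1 / kappa"
| "silver_z kappa (Suc k) =
     (let z = silver_z kappa k; xi = 1 - z in z * (xi + sqrt (1 + xi ^ 2)))"

definition silver_tau :: "real \<Rightarrow> nat \<Rightarrow> real" where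
  "silver_tau kappa k = ((1 - silver_z kappa k) / (1 + silver_z kappa k)) ^ 2"

end

theory Submission
  imports Defs
begin

text \<open>Write \<open>w = z (\<xi> + \<surd>(1 + \<xi>\<^sup>2))\<close> with \<open>\<xi> = 1 - z\<close>. The bound
  \<open>(1 - w)/(1 + w) \<le> ((1 - z)/(1 + z))\<^sup>2\<close> is equivalent to
  \<open>(\<xi> + \<surd>(1 + \<xi>\<^sup>2)) (1 + z\<^sup>2) \<ge> 2\<close>, and this follows from the polynomial identity
  \<open>(2 - \<xi>(1 + z\<^sup>2))\<^sup>2 + \<xi>\<^sup>4 = (1 + \<xi>\<^sup>2)(1 + z\<^sup>2)\<^sup>2\<close>. Similarly
  \<open>(1 - z\<xi>)\<^sup>2 = (1 + \<xi>\<^sup>2) z\<^sup>2 + \<xi>\<^sup>2\<close> shows that \<open>w \<le> 1\<close>, so all \<open>z\<^sub>n\<close> stay in \<open>(0, 1]\<close>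
  and the ratio \<open>(1 - z\<^sub>n)/(1 + z\<^sub>n)\<close> is nonnegative; squaring gives the theorem.\<close>

definition silver_step :: "real \<Rightarrow> real" where
  "silver_step z = z * ((1 - z) + sqrt (1 + (1 - z)^2))"

lemma silver_z_Suc [simp]: "silver_z kappa (Suc k) = silver_step (silver_z kappa k)"
  by (simp add: silver_step_def Let_def)

declare silver_z.simps(2) [simp del]

lemma le_sqrt_mult_abs:
  fixes a p q :: real
  assumes "p^2 \<le> a * q^2"
  shows "p \<le> sqrt a * \<bar>q\<bar>"
proof -
  have "p \<le> sqrt (p^2)" by simp
  also have "\<dots> \<le> sqrt (a * q^2)" using assms by (rule real_sqrt_le_mono)
  also have "\<dots> = sqrt a * \<bar>q\<bar>" by (simp add: real_sqrt_mult)
  finally show ?thesis .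
qed

lemma sqrt_mult_abs_le:
  fixes a p q :: real
  assumes "a * q^2 \<le> p^2"
  shows "sqrt a * \<bar>q\<bar> \<le> \<bar>p\<bar>"
proof -
  have "sqrt a * \<bar>q\<bar> = sqrt (a * q^2)" by (simp add: real_sqrt_mult)
  also have "\<dots> \<le> sqrt (p^2)" using assms by (rule real_sqrt_le_mono)
  finally show ?thesis by simp
qed

lemma silver_step_pos:
  assumes "0 < z"
  shows "0 < silver_step z"
proof -
  have "\<bar>1 - z\<bar> < sqrt (1 + (1 - z)^2)"
    by (rule real_less_rsqrt) (simp add: power2_abs)
  then show ?thesis
    using assms unfolding silver_step_def by (intro mult_pos_pos) auto
qed

lemma silver_step_le_one:
  assumes "0 \<le> z"
  shows "silver_step z \<le> 1"
proof -
  define x where "x = 1 - z"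
  have "(1 - z * x)^2 = (1 + x^2) * z^2 + x^2"
    unfolding x_def by (simp add: power2_eq_square algebra_simps)
  then have "(1 + x^2) * z^2 \<le> (1 - z * x)^2" by simp
  then have "sqrt (1 + x^2) * z \<le> \<bar>1 - z * x\<bar>"
    using sqrt_mult_abs_le assms by fastforce
  moreover have "0 < 1 - z * x"
  proof -
    have "1 - z * x = (z - 1/2)^2 + 3/4"
      unfolding x_def by (simp add: power2_eq_square algebra_simps)
    then show ?thesis using zero_le_power2[of "z - 1/2"] by linarith
  qed
  ultimately show ?thesis
    unfolding silver_step_def x_def[symmetric] by (simp add: algebra_simps)
qed

lemma silver_step_factor_ge: "2 \<le> ((1 - z) + sqrt (1 + (1 - z)^2)) * (1 + z^2)"
proof -
  define x where "x = 1 - z"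
  have "(2 - x * (1 + z^2))^2 \<le> (1 + x^2) * (1 + z^2)^2"
  proof -
    have "(2 - x * (1 + z^2))^2 + x^4 = (1 + x^2) * (1 + z^2)^2"
      unfolding x_def by (simp add: power2_eq_square power4_eq_xxxx algebra_simps)
    then show ?thesis by (smt (verit) zero_le_power_eq_numeral even_numeral)
  qed
  then have "2 - x * (1 + z^2) \<le> sqrt (1 + x^2) * (1 + z^2)"
    using le_sqrt_mult_abs by fastforce
  then show ?thesis
    unfolding x_def[symmetric] by (simp add: algebra_simps)
qed

lemma silver_step_ratio_le:
  assumes "0 < z"
  shows "(1 - silver_step z) / (1 + silver_step z) \<le> ((1 - z) / (1 + z))^2"
proof -
  define w where "w = silver_step z"
  have "0 < w" using silver_step_pos[OF assms] by (simp add: w_def)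
  have "4 * z \<le> w * ((1 + z)^2 + (1 - z)^2)"
  proof -
    have "w * ((1 + z)^2 + (1 - z)^2)
        = 2 * z * (((1 - z) + sqrt (1 + (1 - z)^2)) * (1 + z^2))"
      by (simp add: w_def silver_step_def power2_eq_square algebra_simps)
    moreover have "2 * z * 2 \<le> \<dots>"
      using silver_step_factor_ge assms by (intro mult_left_mono) auto
    ultimately show ?thesis by simp
  qed
  then have "(1 - w) * (1 + z)^2 \<le> (1 - z)^2 * (1 + w)"
    by (simp add: power2_eq_square algebra_simps)
  with \<open>0 < w\<close> assms show ?thesis
    unfolding w_def[symmetric] by (simp add: power_divide divide_simps)
qed

lemma silver_z_bounds:
  assumes "kappa > 1"
  shows "0 < silver_z kappa k \<and> silver_z kappa k \<le> 1"
proof (induction k)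
  case 0
  then show ?case using assms by simp
next
  case (Suc k)
  then show ?case
    using silver_step_pos silver_step_le_one by force
qed

theorem mainTheorem8:
  fixes kappa :: real and k :: nat
  assumes "kappa > 1"
  shows "silver_tau kappa (Suc k) \<le> (silver_tau kappa k) ^ 2"
proof -
  define z where "z = silver_z kappa k"
  define w where "w = silver_z kappa (Suc k)"
  have "0 < z" using silver_z_bounds[OF assms] by (simp add: z_def)
  have "0 < w" "w \<le> 1" using silver_z_bounds[OF assms, of "Suc k"] by (simp_all only: w_def)
  have "(1 - w) / (1 + w) \<le> ((1 - z) / (1 + z))^2"
    using silver_step_ratio_le[OF \<open>0 < z\<close>] by (simp add: w_def z_def)
  moreover have "0 \<le> (1 - w) / (1 + w)"
    using \<open>0 < w\<close> \<open>w \<le> 1\<close> by simp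
  ultimately have "((1 - w) / (1 + w))^2 \<le> (((1 - z) / (1 + z))^2)^2"
    by (rule power_mono)
  then show ?thesis
    unfolding silver_tau_def z_def[symmetric] w_def[symmetric] .
qed

end
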